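(* Let $W_{\tilde{\boldsymbol{\delta}}}\equiv\mathbb{E}[Y_T(\tilde{\boldsymbol{\delta}}(\cdot))]$ for $\tilde{\boldsymbol{\delta}}(\cdot)\in\mathcal{D}_{stoch}$ and $W_{\boldsymbol{\delta}}\equiv E[Y_T(\boldsymbol{\delta}(\cdot))]$ for $\boldsymbol{\delta}(\cdot)\in\mathcal{D}$. Then $$\boldsymbol{\delta}^*(\cdot)\equiv\arg\max_{\boldsymbol{\delta}(\cdot)\in\mathcal{D}}W_{\boldsymbol{\delta}}=\arg\max_{\tilde{\boldsymbol{\delta}}(\cdot)\in\mathcal{D}_{stoch}}W_{\tilde{\boldsymbol{\delta}}}.$$
   Context: Fix $T\ge1$; $\boldsymbol{w}^t=(w_1,\dots,w_t)$. Binary potential outcomes $Y_t(\boldsymbol{d}^t)\in\{0,1\}$ are defined for each treatment history $\boldsymbol{d}^t\in\{0,1\}^t$, $t=1,\dots,T$. A deterministic dynamic regime is $\boldsymbol{\delta}(\cdot)=(\delta_1,\delta_2(\cdot),\dots,\delta_T(\cdot))$ with $\delta_t:\{0,1\}^{t-1}\times\{0,1\}^{t-1}\to\{0,1\}$; $\mathcal{D}$ is the set of all such regimes. The counterfactual outcome is $Y_T(\boldsymbol{\delta}(\cdot))=Y_T(\boldsymbol{d})$ where $d_1=\delta_1$ and $d_t=\delta_t(\boldsymbol{Y}^{t-1}(\boldsymbol{d}^{t-1}),\boldsymbol{d}^{t-1})$ for $t\ge2$. A stochastic dynamic regime is $\tilde{\boldsymbol{\delta}}(\cdot)=(\tilde\delta_1,\dots,\tilde\delta_T(\cdot))$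 whose rules take values in $[0,1]$ (probability of treatment) given the past outcomes and treatments; $\mathcal{D}_{stoch}$ is the set of all such regimes, so $\mathcal{D}\subset\mathcal{D}_{stoch}$. $Y_T(\tilde{\boldsymbol{\delta}}(\cdot))$ is the counterfactual outcome $Y_T(\boldsymbol{\delta}(\cdot))$ where, for every $t\le T$, the deterministic rule value $\delta_t(\cdot)=1$ is randomly assigned with probability $\tilde\delta_t(\cdot)$ and $\delta_t(\cdot)=0$ otherwise; $\mathbb{E}$ denotes expectation over the counterfactual outcomes and this randomization. *)

theory Defs
  imports "HOL-Probability.Probability"
begin

text \<open>A world fixes all binary potential outcomes: Y_t(d^t) = w d^t for a
treatment history d^t (a bool list of length t, 1 \<le> t \<le> T).
The joint law of the potential outcomes is a pmf over worlds.\<close>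
type_synonym world = "bool list \<Rightarrow> bool"

text \<open>Deterministic regime: delta t y d is the treatment at period t given the
outcome history y = Y^{t-1} and treatment history d = d^{t-1} (lists of length t-1).\<close>
type_synonym det_regime = "nat \<Rightarrow> bool list \<Rightarrow> bool list \<Rightarrow> bool"

text \<open>Stochastic regime: probability of treatment at period t given the past.\<close>
type_synonym stoch_regime = "nat \<Rightarrow> bool list \<Rightarrow> bool list \<Rightarrow> real"

definition regimes :: "det_regime set" where
  "regimes = UNIV"

definition stoch_regimes :: "stoch_regime set" where
  "stoch_regimes = {dt. \<forall>t y d. 0 \<le> dt t y d \<and> dt t y d \<le> 1}"

definition embed :: "det_regime \<Rightarrow> stoch_regime" where
  "embed delta = (\<lambda>t y d. if delta t y d then 1 else 0)"

fun det_path :: "det_regime \<Rightarrow> world \<Rightarrow> nat \<Rightarrow> bool list \<times> bool list" where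
  "det_path delta w 0 = ([], [])"
| "det_path delta w (Suc t) =
     (let (d, y) = det_path delta w t; d' = d @ [delta (Suc t) y d] in (d', y @ [w d']))"

definition Y_det :: "nat \<Rightarrow> det_regime \<Rightarrow> world \<Rightarrow> bool" where
  "Y_det T delta w = w (fst (det_path delta w T))"

fun stoch_path :: "stoch_regime \<Rightarrow> world \<Rightarrow> nat \<Rightarrow> (bool list \<times> bool list) pmf" where
  "stoch_path dt w 0 = return_pmf ([], [])"
| "stoch_path dt w (Suc t) =
     bind_pmf (stoch_path dt w t) (\<lambda>(d, y).
       map_pmf (\<lambda>b. let d' = d @ [b] in (d', y @ [w d'])) (bernoulli_pmf (dt (Suc t) y d)))"

definition W_det :: "world pmf \<Rightarrow> nat \<Rightarrow> det_regime \<Rightarrow> real" where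
  "W_det P T delta = measure_pmf.expectation P (\<lambda>w. of_bool (Y_det T delta w))"

definition W_stoch :: "world pmf \<Rightarrow> nat \<Rightarrow> stoch_regime \<Rightarrow> real" where
  "W_stoch P T dt = measure_pmf.expectation
      (bind_pmf P (\<lambda>w. map_pmf (\<lambda>(d, y). w d) (stoch_path dt w T))) (\<lambda>b. of_bool b)"

end

theory Submission
  imports Defs
begin

text \<open>A stochastic regime is a mixture of deterministic ones: toss in advance one independent
  coin of bias dt s y d for every decision point (s, y, d) and follow the deterministic regime
  these coins spell out; the path this produces has exactly the law of the stochastically
  generated path. Hence the value of a stochastic regime is an average of values of
  deterministic regimes and cannot exceed their maximum, which is attained because the value
  of a deterministic regime only depends on its finitely many decisions up to period T.
  Conversely, a deterministic regime is a stochastic one with the same value.\<close>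

definition histories :: "nat \<Rightarrow> bool list set" where
  "histories t = {xs. length xs = t}"

definition decision_points :: "nat \<Rightarrow> (nat \<times> bool list \<times> bool list) set" where
  "decision_points t = {(s, y, d). 1 \<le> s \<and> s \<le> t \<and> length y = s - 1 \<and> length d = s - 1}"

definition regime_of :: "(nat \<times> bool list \<times> bool list \<Rightarrow> bool) \<Rightarrow> det_regime" where
  "regime_of f = (\<lambda>s y d. f (s, y, d))"

definition treatment_coin :: "stoch_regime \<Rightarrow> nat \<times> bool list \<times> bool list \<Rightarrow> bool pmf" where
  "treatment_coin dt = (\<lambda>(s, y, d). bernoulli_pmf (dt s y d))"

definition treatment_coins ::
    "stoch_regime \<Rightarrow> nat \<Rightarrow> (nat \<times> bool list \<times> bool list \<Rightarrow> bool) pmf" where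
  "treatment_coins dt t = Pi_pmf (decision_points t) False (treatment_coin dt)"

lemma decision_points_Suc:
  "decision_points (Suc t) =
     decision_points t \<union> {Suc t} \<times> histories t \<times> histories t"
  unfolding decision_points_def histories_def by auto

lemma decision_points_0: "decision_points 0 = {}"
  unfolding decision_points_def by auto

lemma finite_histories: "finite (histories t)"
  using finite_lists_length_eq[of "UNIV :: bool set" t] by (simp add: histories_def)

lemma finite_decision_points: "finite (decision_points t)"
  by (induction t) (simp_all add: decision_points_0 decision_points_Suc finite_histories)

lemma length_det_path:
  "length (fst (det_path delta w t)) = t" "length (snd (det_path delta w t)) = t"
  by (induction t) (auto simp: Let_def split: prod.splits)

lemma det_path_cong:
  assumes "\<And>s y d. (s, y, d) \<in> decision_points t \<Longrightarrow> delta s y d = delta' s y d"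
  shows "det_path delta w t = det_path delta' w t"
  using assms
proof (induction t)
  case (Suc t)
  obtain d y where dy: "det_path delta w t = (d, y)" by fastforce
  with length_det_path[of delta w t] have "(Suc t, y, d) \<in> decision_points (Suc t)"
    by (auto simp: decision_points_def)
  moreover have "det_path delta' w t = (d, y)"
    using Suc dy by (metis UnCI decision_points_Suc)
  ultimately show ?case
    using Suc.prems dy by (simp add: Let_def)
qed simp

lemma treatment_coins_Suc:
  "treatment_coins dt (Suc t) = bind_pmf (treatment_coins dt t) (\<lambda>f.
     map_pmf (\<lambda>g x. if x \<in> decision_points t then f x else g x)
       (Pi_pmf ({Suc t} \<times> histories t \<times> histories t) False (treatment_coin dt)))"
proof -
  have "decision_points t \<inter> {Suc t} \<times> histories t \<times> histories t = {}"
    by (auto simp: decision_points_def)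
  then show ?thesis
    unfolding treatment_coins_def decision_points_Suc
    by (simp add: Pi_pmf_union finite_decision_points finite_histories pair_pmf_def
        map_pmf_def bind_assoc_pmf bind_return_pmf)
qed

lemma stoch_path_eq_map_det_path:
  "stoch_path dt w t = map_pmf (\<lambda>f. det_path (regime_of f) w t) (treatment_coins dt t)"
proof (induction t)
  case 0
  show ?case by (simp add: treatment_coins_def decision_points_0)
next
  case (Suc t)
  define extend where "extend d y = (\<lambda>b. let d' = d @ [b] in (d', y @ [w d']))"
    for d y :: "bool list"
  define merge where "merge f g = (\<lambda>x. if x \<in> decision_points t then f x else g x)"
    for f g :: "nat \<times> bool list \<times> bool list \<Rightarrow> bool"
  define new_coins where
    "new_coins = Pi_pmf ({Suc t} \<times> histories t \<times> histories t) False (treatment_coin dt)"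
  have step: "map_pmf (\<lambda>g. det_path (regime_of (merge f g)) w (Suc t)) new_coins
     = (case det_path (regime_of f) w t of
          (d, y) \<Rightarrow> map_pmf (extend d y) (bernoulli_pmf (dt (Suc t) y d)))" for f
  proof -
    obtain d y where dy: "det_path (regime_of f) w t = (d, y)" by fastforce
    with length_det_path[of "regime_of f" w t]
    have new: "(Suc t, y, d) \<in> {Suc t} \<times> histories t \<times> histories t"
      "(Suc t, y, d) \<notin> decision_points t"
      by (auto simp: histories_def decision_points_def)
    have "det_path (regime_of (merge f g)) w t = (d, y)" for g
      using dy by (subst det_path_cong[where delta' = "regime_of f"])
        (auto simp: regime_of_def merge_def)
    with new have "map_pmf (\<lambda>g. det_path (regime_of (merge f g)) w (Suc t)) new_coins
        = map_pmf (extend d y) (map_pmf (\<lambda>g. g (Suc t, y, d)) new_coins)"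
      by (simp add: pmf.map_comp o_def extend_def regime_of_def merge_def)
    also have "\<dots> = map_pmf (extend d y) (bernoulli_pmf (dt (Suc t) y d))"
      using new by (simp add: new_coins_def Pi_pmf_component finite_histories treatment_coin_def)
    finally show ?thesis using dy by simp
  qed
  have "stoch_path dt w (Suc t) = bind_pmf (treatment_coins dt t) (\<lambda>f.
      case det_path (regime_of f) w t of
        (d, y) \<Rightarrow> map_pmf (extend d y) (bernoulli_pmf (dt (Suc t) y d)))"
    by (simp add: Suc.IH bind_map_pmf extend_def o_def)
  also have "\<dots> = map_pmf (\<lambda>f. det_path (regime_of f) w (Suc t)) (treatment_coins dt (Suc t))"
    by (simp only: treatment_coins_Suc map_bind_pmf pmf.map_comp o_def
        step[unfolded new_coins_def merge_def])
  finally show ?case .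
qed

lemma expectation_of_bool_pmf:
  "measure_pmf.expectation (M :: bool pmf) of_bool = pmf M True"
  by (subst integral_measure_pmf_real[of "{True}"]) auto

lemma W_det_eq_pmf: "W_det P T delta = pmf (map_pmf (Y_det T delta) P) True"
  by (simp add: W_det_def flip: expectation_of_bool_pmf)

lemma W_stoch_eq_expectation_W_det:
  "W_stoch P T dt =
     measure_pmf.expectation (treatment_coins dt T) (\<lambda>f. W_det P T (regime_of f))"
proof -
  have "bind_pmf P (\<lambda>w. map_pmf (\<lambda>(d, y). w d) (stoch_path dt w T))
      = bind_pmf P (\<lambda>w. bind_pmf (treatment_coins dt T)
          (\<lambda>f. return_pmf (Y_det T (regime_of f) w)))"
    by (simp add: stoch_path_eq_map_det_path pmf.map_comp o_def Y_det_def case_prod_unfold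
        map_pmf_def bind_assoc_pmf bind_return_pmf)
  also have "\<dots> = bind_pmf (treatment_coins dt T) (\<lambda>f. map_pmf (Y_det T (regime_of f)) P)"
    by (subst bind_commute_pmf) (simp add: map_pmf_def)
  finally have mixture: "bind_pmf P (\<lambda>w. map_pmf (\<lambda>(d, y). w d) (stoch_path dt w T))
      = bind_pmf (treatment_coins dt T) (\<lambda>f. map_pmf (Y_det T (regime_of f)) P)" .
  show ?thesis
    unfolding W_stoch_def mixture expectation_of_bool_pmf pmf_bind W_det_eq_pmf ..
qed

lemma bernoulli_pmf_if_1_0: "bernoulli_pmf (if b then 1 else 0) = return_pmf b"
  by (rule pmf_eqI) (auto simp: indicator_def)

lemma stoch_path_embed: "stoch_path (embed delta) w t = return_pmf (det_path delta w t)"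
  by (induction t)
     (auto simp: embed_def bernoulli_pmf_if_1_0 Let_def bind_return_pmf split: prod.splits)

lemma W_stoch_embed: "W_stoch P T (embed delta) = W_det P T delta"
  by (simp add: W_stoch_def W_det_def stoch_path_embed Y_det_def case_prod_unfold
      flip: map_pmf_def)

lemma W_stoch_le_if_W_det_le:
  assumes "\<And>delta. W_det P T delta \<le> c"
  shows "W_stoch P T dt \<le> c"
proof -
  have "\<bar>W_det P T delta\<bar> \<le> 1" for delta
    by (simp add: W_det_eq_pmf pmf_le_1)
  then show ?thesis
    unfolding W_stoch_eq_expectation_W_det
    by (intro measure_pmf.integral_le_const measure_pmf.integrable_const_bound[where B = 1])
       (simp_all add: assms)
qed

lemma W_det_cong:
  assumes "\<And>s y d. (s, y, d) \<in> decision_points T \<Longrightarrow> delta s y d = delta' s y d"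
  shows "W_det P T delta = W_det P T delta'"
  using det_path_cong[OF assms] by (simp add: W_det_def Y_det_def)

lemma finite_range_W_det: "finite (range (W_det P T))"
proof -
  let ?F = "PiE_dflt (decision_points T) False (\<lambda>_. UNIV)"
  have "W_det P T delta \<in> (\<lambda>f. W_det P T (regime_of f)) ` ?F" for delta
  proof
    let ?f = "\<lambda>x. if x \<in> decision_points T then (case x of (s, y, d) \<Rightarrow> delta s y d) else False"
    show "?f \<in> ?F"
      by (simp add: PiE_dflt_def)
    show "W_det P T delta = W_det P T (regime_of ?f)"
      by (rule W_det_cong) (simp add: regime_of_def)
  qed
  then have "range (W_det P T) \<subseteq> (\<lambda>f. W_det P T (regime_of f)) ` ?F"
    by (intro image_subsetI)
  moreover have "finite ?F"
    by (simp add: finite_PiE_dflt finite_decision_points)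
  ultimately show ?thesis
    by (rule finite_subset[OF _ finite_imageI])
qed

lemma ex_max_if_finite_range:
  fixes f :: "'a \<Rightarrow> 'b :: linorder"
  assumes "finite (range f)"
  shows "\<exists>x. \<forall>y. f y \<le> f x"
proof -
  obtain x where "f x = Max (range f)"
    using Max_in[OF assms] by (metis UNIV_not_empty empty_is_image imageE)
  moreover have "f y \<le> Max (range f)" for y
    using assms by (rule Max_ge) simp
  ultimately show ?thesis
    by metis
qed

theorem theorem3:
  fixes P :: "world pmf" and T :: nat
  assumes "T \<ge> 1"
  shows "(\<exists>delta\<in>regimes. \<forall>delta'\<in>regimes. W_det P T delta' \<le> W_det P T delta)
       \<and> (\<forall>delta\<in>regimes.
            (\<forall>delta'\<in>regimes. W_det P T delta' \<le> W_det P T delta)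
            \<longleftrightarrow> (\<forall>dt\<in>stoch_regimes. W_stoch P T dt \<le> W_stoch P T (embed delta)))"
proof -
  have optimal_iff: "(\<forall>delta'. W_det P T delta' \<le> W_det P T delta)
        \<longleftrightarrow> (\<forall>dt\<in>stoch_regimes. W_stoch P T dt \<le> W_stoch P T (embed delta))" for delta
  proof
    assume "\<forall>delta'. W_det P T delta' \<le> W_det P T delta"
    then show "\<forall>dt\<in>stoch_regimes. W_stoch P T dt \<le> W_stoch P T (embed delta)"
      by (simp add: W_stoch_embed W_stoch_le_if_W_det_le)
  next
    assume "\<forall>dt\<in>stoch_regimes. W_stoch P T dt \<le> W_stoch P T (embed delta)"
    moreover have "embed delta' \<in> stoch_regimes" for delta'
      by (simp add: stoch_regimes_def embed_def)
    ultimately show "\<forall>delta'. W_det P T delta' \<le> W_det P T delta"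
      by (metis W_stoch_embed)
  qed
  have "\<exists>delta. \<forall>delta'. W_det P T delta' \<le> W_det P T delta"
    by (rule ex_max_if_finite_range[OF finite_range_W_det])
  then show ?thesis
    unfolding regimes_def using optimal_iff by simp
qed

end
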